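(* Let $0<\alpha<1$, $\theta>0$, and let $\bar Z^{\alpha,\theta}(t)=(M_1(D_{\alpha,\theta}(t)),\dots,M_q(D_{\alpha,\theta}(t)))$. Then for every $\bar n=(n_1,\dots,n_q)\in\mathbb{N}_0^q$ and $t\ge0$, $$\Pr\{\bar Z^{\alpha,\theta}(t)=\bar n\}=e^{t\theta^\alpha}\sum_{\substack{\Omega(k_i,n_i)\\ i=1,\dots,q}}\sum_{r=0}^\infty\frac{(-t(\lambda+\theta)^\alpha)^r}{r!}\,\frac{\Gamma(\alpha r+1)}{\Gamma\big(\alpha r+1-\sum_{i=1}^q\sum_{j=1}^{k_i}x_{ij}\big)}\prod_{i=1}^q\prod_{j=1}^{k_i}\frac{(-\lambda_{ij}/(\lambda+\theta))^{x_{ij}}}{x_{ij}!}.$$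
   Context: Fix $q\ge1$, integers $k_1,\dots,k_q\ge1$, $\lambda_{ij}>0$ ($1\le i\le q$, $1\le j\le k_i$), $\lambda=\sum_{i,j}\lambda_{ij}$. The MGCP $\bar M(t)=(M_1(t),\dots,M_q(t))$ is the $\mathbb{N}_0^q$-valued process with $\bar M(0)=\bar0$, independent stationary increments and transition probabilities $\Pr\{\bar M(t+h)=\bar n+\bar j\mid\bar M(t)=\bar n\}=\lambda_{ij}h+o(h)$ if $\bar j$ has $i$th entry $j\in\{1,\dots,k_i\}$ and other entries $0$, $1-\lambda h+o(h)$ if $\bar j=\bar0$, $o(h)$ otherwise (equivalently, independent components with joint pgf $\exp(-t\sum_{i,j}\lambda_{ij}(1-u_i^j))$). $\{D_{\alpha,\theta}(t)\}$ is a tempered $\alpha$-stable subordinator independent of $\bar M$: $\mathbb{E}e^{-sD_{\alpha,\theta}(t)}=e^{-t((s+\theta)^\alpha-\theta^\alpha)}$. $\Omega(k_i,n_i)=\{(x_{i1},\dots,x_{ik_i})\in\mathbb{N}_0^{k_i}:\sum_jjx_{ij}=n_i\}$; the outer sum runs over families $(x_{ij})$ with $(x_{i1},\dots,x_{ik_i})\in\Omega(k_i,n_i)$ for each $i$. Convention: $1/\Gamma(z)=0$ for $z\in\{0,-1,-2,\dots\}$. *)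

theory Defs
  imports "HOL-Probability.Probability"
begin

text \<open>Components are indexed by i < q (0-based), jump sizes by j in {1..k i}.
  Vectors in N_0^q are functions nat => nat of which only entries i < q matter.\<close>

definition mgcp_marginals ::
  "'a measure \<Rightarrow> nat \<Rightarrow> (nat \<Rightarrow> nat) \<Rightarrow> (nat \<Rightarrow> nat \<Rightarrow> real)
    \<Rightarrow> (real \<Rightarrow> 'a \<Rightarrow> nat \<Rightarrow> nat) \<Rightarrow> bool" where
  "mgcp_marginals P q k lam M \<longleftrightarrow>
     (\<forall>s i. i < q \<longrightarrow> (\<lambda>\<omega>. M s \<omega> i) \<in> measurable P (count_space UNIV)) \<and>
     (\<forall>s\<ge>0. \<forall>u::nat \<Rightarrow> real. (\<forall>i<q. 0 \<le> u i \<and> u i \<le> 1) \<longrightarrow>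
        integral\<^sup>L P (\<lambda>\<omega>. \<Prod>i<q. u i ^ M s \<omega> i)
          = exp (- s * (\<Sum>i<q. \<Sum>j=1..k i. lam i j * (1 - u i ^ j))))"

definition tss_marginals ::
  "'a measure \<Rightarrow> real \<Rightarrow> real \<Rightarrow> (real \<Rightarrow> 'a \<Rightarrow> real) \<Rightarrow> bool" where
  "tss_marginals P \<alpha> \<theta> D \<longleftrightarrow>
     (\<forall>t\<ge>0. D t \<in> borel_measurable P \<and> (AE \<omega> in P. 0 \<le> D t \<omega>) \<and>
        (\<forall>s\<ge>0. integral\<^sup>L P (\<lambda>\<omega>. exp (- s * D t \<omega>))
                 = exp (- t * ((s + \<theta>) powr \<alpha> - \<theta> powr \<alpha>))))"

text \<open>Pr{ M(D(t)) = n } for D independent of M (conditioning on D(t)):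
  integral of Pr{M(s) = n} against the law of D(t).\<close>
definition subordinated_prob ::
  "'a measure \<Rightarrow> nat \<Rightarrow> (real \<Rightarrow> 'a \<Rightarrow> nat \<Rightarrow> nat) \<Rightarrow> (real \<Rightarrow> 'a \<Rightarrow> real)
    \<Rightarrow> real \<Rightarrow> (nat \<Rightarrow> nat) \<Rightarrow> real" where
  "subordinated_prob P q M D t n =
     integral\<^sup>L (distr P borel (D t))
       (\<lambda>s. if 0 \<le> s then measure P {\<omega> \<in> space P. \<forall>i<q. M s \<omega> i = n i} else 0)"

definition Omega_family :: "nat \<Rightarrow> (nat \<Rightarrow> nat) \<Rightarrow> (nat \<Rightarrow> nat) \<Rightarrow> (nat \<Rightarrow> nat \<Rightarrow> nat) set" where
  "Omega_family q k n = {x. (\<forall>i<q. (\<Sum>j=1..k i. j * x i j) = n i) \<and>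
      (\<forall>i j. \<not> (i < q \<and> 1 \<le> j \<and> j \<le> k i) \<longrightarrow> x i j = 0)}"

end

theory Submission
  imports Defs
begin

text \<open>
  Conditionally on D(t) = s, the MGCP is at n with probability
  exp (- s L) * (sum over x in Omega of s^|x| * prod lam^x / x!), where L is the total rate and
  |x| the total number of jumps; this is read off the product form of the joint pgf by comparing
  power-series coefficients one variable at a time. Integrating against the law of D(t) leaves the
  moments E [D(t)^m exp (- L D(t))]. Up to the factor m! (-1)^m these are the v^m-coefficients of
  E exp (- (L - v) D(t)) = exp (t \<theta>^\<alpha>) exp (- t (L + \<theta> - v)^\<alpha>). Expanding the last exponential
  by the exponential series and each (L + \<theta> - v)^(\<alpha> r) by the binomial series gives an absolutely
  convergent double series; summing it the other way round produces the coefficients, with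
  Gamma (\<alpha> r + 1) / Gamma (\<alpha> r + 1 - m) coming from the binomial coefficients.
\<close>

section \<open>Power series coefficients\<close>

lemma real_powser_coeff_eq_0:
  fixes c :: "nat \<Rightarrow> real"
  assumes "\<delta> > 0" and "\<And>v. 0 < v \<Longrightarrow> v \<le> \<delta> \<Longrightarrow> (\<lambda>l. c l * v ^ l) sums 0"
  shows "c m = 0"
proof (induction m rule: less_induct)
  case (less m)
  have tail: "(\<lambda>l. c (l + m) * v ^ l) sums 0" if v: "0 < v" "v \<le> \<delta>" for v
  proof -
    have "(\<Sum>i<m. c i * v ^ i) = 0" using less by simp
    then have "(\<lambda>l. c (l + m) * v ^ (l + m)) sums 0"
      using assms(2)[OF v] sums_iff_shift[of "\<lambda>l. c l * v ^ l" m 0] by simp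
    then have "(\<lambda>l. c (l + m) * v ^ (l + m) / v ^ m) sums 0"
      using sums_divide by fastforce
    then show ?thesis using v by (simp add: power_add)
  qed
  define h where "h x = (\<Sum>l. c (l + m) * x ^ l)" for x :: real
  have "summable (\<lambda>l. c (l + m) * \<delta> ^ l)" using tail[of \<delta>] assms(1) by (simp add: sums_iff)
  then have "isCont h 0" unfolding h_def by (rule isCont_powser) (use assms(1) in simp)
  then have "(h \<longlongrightarrow> c m) (at_right 0)"
    using powser_zero[of "\<lambda>l. c (l + m)"] by (simp add: isCont_def filterlim_at_split h_def)
  moreover have "eventually (\<lambda>x. h x = 0) (at_right 0)"
    unfolding eventually_at_right_field using assms(1)
    by (intro exI[of _ \<delta>]) (auto simp: h_def intro!: sums_unique[symmetric] tail)
  ultimately have "((\<lambda>_. 0) \<longlongrightarrow> c m) (at_right (0::real))"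
    using Lim_transform_eventually by fastforce
  then show ?case using tendsto_const tendsto_unique trivial_limit_at_right_real by metis
qed

lemma real_powser_unique:
  fixes a b :: "nat \<Rightarrow> real"
  assumes "\<delta> > 0"
    and "\<And>v. 0 < v \<Longrightarrow> v \<le> \<delta> \<Longrightarrow> (\<lambda>l. a l * v ^ l) sums f v"
    and "\<And>v. 0 < v \<Longrightarrow> v \<le> \<delta> \<Longrightarrow> (\<lambda>l. b l * v ^ l) sums f v"
  shows "a m = b m"
proof -
  have "(\<lambda>l. a l - b l) m = 0"
  proof (rule real_powser_coeff_eq_0[OF assms(1)])
    fix v :: real assume "0 < v" "v \<le> \<delta>"
    from sums_diff[OF assms(2,3)[OF this]] show "(\<lambda>l. (a l - b l) * v ^ l) sums 0"
      by (simp add: algebra_simps)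
  qed
  then show ?thesis by simp
qed

section \<open>Point probabilities of the MGCP\<close>

definition partition_mults :: "nat set \<Rightarrow> nat \<Rightarrow> (nat \<Rightarrow> nat) set" where
  "partition_mults J m = {x. (\<Sum>j\<in>J. j * x j) = m \<and> (\<forall>j. j \<notin> J \<longrightarrow> x j = 0)}"

definition exp_poly_coeff :: "nat set \<Rightarrow> (nat \<Rightarrow> real) \<Rightarrow> nat \<Rightarrow> real" where
  "exp_poly_coeff J a m = (\<Sum>x\<in>partition_mults J m. \<Prod>j\<in>J. a j ^ x j / fact (x j))"

lemma finite_partition_mults:
  assumes "finite J" "0 \<notin> J"
  shows "finite (partition_mults J m)"
proof (rule finite_subset)
  show "partition_mults J m \<subseteq> {x. \<forall>j. (j \<in> J \<longrightarrow> x j \<in> {..m}) \<and> (j \<notin> J \<longrightarrow> x j = 0)}"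
  proof (intro subsetI CollectI allI conjI impI)
    fix x j assume x: "x \<in> partition_mults J m"
    show "x j = 0" if "j \<notin> J" using x that by (simp add: partition_mults_def)
    assume j: "j \<in> J"
    have "x j \<le> j * x j" using j assms(2) by (cases j) auto
    also have "\<dots> \<le> (\<Sum>j\<in>J. j * x j)" using j assms(1) by (intro member_le_sum) auto
    finally show "x j \<in> {..m}" using x by (simp add: partition_mults_def)
  qed
  show "finite {x. \<forall>j. (j \<in> J \<longrightarrow> x j \<in> {..m}) \<and> (j \<notin> J \<longrightarrow> x j = (0::nat))}"
    by (rule finite_set_of_finite_funs) (use assms in auto)
qed

lemma exp_poly_coeff_insert:
  assumes J: "finite J" "i \<notin> J" "0 \<notin> insert i J"
  shows "exp_poly_coeff (insert i J) a m =
    (\<Sum>l\<le>m. (if i dvd l then a i ^ (l div i) / fact (l div i) else 0) * exp_poly_coeff J a (m - l))"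
proof -
  have ipos: "i > 0" using J by auto
  define A where "A = {y. i * y \<le> m}"
  have "A \<subseteq> {..m}"
    unfolding A_def using ipos by (auto elim!: le_trans[rotated])
  then have finA: "finite A" by (rule finite_subset) simp
  have sum_upd: "(\<Sum>j\<in>J. j * (if j = i then y else x j)) = (\<Sum>j\<in>J. j * x j)" for x y
    using J by (intro sum.cong) auto
  have bij: "bij_betw (\<lambda>(y, x). x(i := y)) (Sigma A (\<lambda>y. partition_mults J (m - i * y)))
      (partition_mults (insert i J) m)"
    by (rule bij_betwI[where g = "\<lambda>x. (x i, x(i := 0))"])
       (use J in \<open>auto simp: partition_mults_def A_def sum_upd fun_eq_iff\<close>)
  have "exp_poly_coeff (insert i J) a m = (\<Sum>x\<in>partition_mults (insert i J) m.
      a i ^ x i / fact (x i) * (\<Prod>j\<in>J. a j ^ x j / fact (x j)))"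
    unfolding exp_poly_coeff_def using J by simp
  also have "\<dots> = (\<Sum>(y, x)\<in>Sigma A (\<lambda>y. partition_mults J (m - i * y)).
      a i ^ y / fact y * (\<Prod>j\<in>J. a j ^ x j / fact (x j)))"
    by (subst sum.reindex_bij_betw[OF bij, symmetric])
       (use J in \<open>auto intro!: sum.cong prod.cong split: if_split_asm\<close>)
  also have "\<dots> = (\<Sum>y\<in>A. a i ^ y / fact y * exp_poly_coeff J a (m - i * y))"
    using finA finite_partition_mults[of J] J
    by (subst sum.Sigma[symmetric]) (auto simp: exp_poly_coeff_def sum_distrib_left)
  also have "\<dots> = (\<Sum>l\<in>(\<lambda>y. i * y) ` A.
      (if i dvd l then a i ^ (l div i) / fact (l div i) else 0) * exp_poly_coeff J a (m - l))"
    using ipos by (subst sum.reindex) (auto simp: inj_on_def)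
  also have "\<dots> = (\<Sum>l\<le>m.
      (if i dvd l then a i ^ (l div i) / fact (l div i) else 0) * exp_poly_coeff J a (m - l))"
    by (rule sum.mono_neutral_left) (auto simp: A_def)
  finally show ?thesis .
qed

lemma exp_poly_coeff_nonneg: "(\<And>j. j \<in> J \<Longrightarrow> 0 \<le> a j) \<Longrightarrow> 0 \<le> exp_poly_coeff J a m"
  unfolding exp_poly_coeff_def by (intro sum_nonneg prod_nonneg) auto

lemma sums_exp_times_power:
  fixes c v :: real
  assumes "0 < i"
  shows "(\<lambda>l. (if i dvd l then c ^ (l div i) / fact (l div i) else 0) * v ^ l) sums exp (c * v ^ i)"
proof -
  have "(\<lambda>y. (if i dvd i * y then c ^ (i * y div i) / fact (i * y div i) else 0) * v ^ (i * y))
      = (\<lambda>y. (c * v ^ i) ^ y /\<^sub>R fact y)"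
    using assms by (auto simp: power_mult power_mult_distrib divide_inverse fun_eq_iff)
  moreover have "strict_mono (\<lambda>y. i * y)"
    using assms by (auto simp: strict_mono_def)
  ultimately show ?thesis
    using exp_converges[of "c * v ^ i"] by (subst sums_mono_reindex[symmetric, of "\<lambda>y. i * y"]) auto
qed

lemma exp_poly_coeff_sums:
  assumes "finite J" "0 \<notin> J" "\<And>j. j \<in> J \<Longrightarrow> 0 \<le> a j" "0 \<le> v"
  shows "(\<lambda>m. exp_poly_coeff J a m * v ^ m) sums exp (\<Sum>j\<in>J. a j * v ^ j)"
  using assms(1-3)
proof (induction J rule: finite_induct)
  case empty
  have "partition_mults {} m = (if m = 0 then {\<lambda>_. 0} else {})" for m
    by (auto simp: partition_mults_def)
  then have "(\<lambda>m. exp_poly_coeff {} a m * v ^ m) = (\<lambda>m. if m = 0 then 1 else 0)"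
    by (auto simp: exp_poly_coeff_def fun_eq_iff)
  then show ?case using sums_single[of 0 "\<lambda>_. 1::real"] by simp
next
  case (insert i J)
  define b where "b l = (if i dvd l then a i ^ (l div i) / fact (l div i) else 0)" for l
  have IH: "(\<lambda>m. exp_poly_coeff J a m * v ^ m) sums exp (\<Sum>j\<in>J. a j * v ^ j)"
    using insert by auto
  have b_sums: "(\<lambda>l. b l * v ^ l) sums exp (a i * v ^ i)"
    unfolding b_def using insert by (intro sums_exp_times_power) auto
  have "(\<lambda>m. \<Sum>l\<le>m. (b l * v ^ l) * (exp_poly_coeff J a (m - l) * v ^ (m - l))) sums
      ((\<Sum>l. b l * v ^ l) * (\<Sum>m. exp_poly_coeff J a m * v ^ m))"
    using b_sums IH insert assms(4) exp_poly_coeff_nonneg[of J a]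
    by (intro Cauchy_product_sums) (auto simp: b_def sums_iff)
  also have "(\<Sum>l. b l * v ^ l) * (\<Sum>m. exp_poly_coeff J a m * v ^ m)
      = exp (a i * v ^ i) * exp (\<Sum>j\<in>J. a j * v ^ j)"
    using b_sums IH by (simp add: sums_iff)
  also have "(\<lambda>m. \<Sum>l\<le>m. (b l * v ^ l) * (exp_poly_coeff J a (m - l) * v ^ (m - l)))
      = (\<lambda>m. exp_poly_coeff (insert i J) a m * v ^ m)"
  proof
    fix m
    have "(\<Sum>l\<le>m. (b l * v ^ l) * (exp_poly_coeff J a (m - l) * v ^ (m - l)))
        = (\<Sum>l\<le>m. b l * exp_poly_coeff J a (m - l)) * v ^ m"
      unfolding sum_distrib_right
      by (intro sum.cong refl) (simp add: power_add[symmetric] mult_ac)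
    then show "(\<Sum>l\<le>m. (b l * v ^ l) * (exp_poly_coeff J a (m - l) * v ^ (m - l)))
        = exp_poly_coeff (insert i J) a m * v ^ m"
      using insert by (simp add: exp_poly_coeff_insert b_def)
  qed
  also have "exp (a i * v ^ i) * exp (\<Sum>j\<in>J. a j * v ^ j) = exp (\<Sum>j\<in>insert i J. a j * v ^ j)"
    using insert by (simp add: exp_add)
  finally show ?case .
qed

lemma bij_betw_Omega_family_PiE:
  "bij_betw (\<lambda>x. restrict x {..<q}) (Omega_family q k n)
     (PiE {..<q} (\<lambda>i. partition_mults {1..k i} (n i)))"
proof (rule bij_betwI[where g = "\<lambda>y i. if i < q then y i else (\<lambda>_. 0)"])
  show "(\<lambda>x. restrict x {..<q}) \<in> Omega_family q k n \<rightarrow> (\<Pi>\<^sub>E i\<in>{..<q}. partition_mults {1..k i} (n i))"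
    by (auto simp: Omega_family_def partition_mults_def)
  show "(\<lambda>y i. if i < q then y i else (\<lambda>_. 0))
      \<in> (\<Pi>\<^sub>E i\<in>{..<q}. partition_mults {1..k i} (n i)) \<rightarrow> Omega_family q k n"
    by (fastforce simp: Omega_family_def partition_mults_def PiE_iff)
  show "(\<lambda>i. if i < q then restrict x {..<q} i else (\<lambda>_. 0)) = x" if "x \<in> Omega_family q k n" for x
    using that by (auto simp: Omega_family_def fun_eq_iff)
  show "restrict (\<lambda>i. if i < q then y i else (\<lambda>_. 0)) {..<q} = y"
    if "y \<in> (\<Pi>\<^sub>E i\<in>{..<q}. partition_mults {1..k i} (n i))" for y
    using that by (auto simp: PiE_def extensional_def fun_eq_iff)
qed

lemma sum_Omega_family_prod:
  fixes f :: "nat \<Rightarrow> (nat \<Rightarrow> nat) \<Rightarrow> 'a::comm_semiring_1"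
  shows "(\<Sum>x\<in>Omega_family q k n. \<Prod>i<q. f i (x i))
     = (\<Prod>i<q. \<Sum>y\<in>partition_mults {1..k i} (n i). f i y)"
proof -
  have "(\<Sum>x\<in>Omega_family q k n. \<Prod>i<q. f i (x i))
      = (\<Sum>x\<in>Omega_family q k n. \<Prod>i<q. f i (restrict x {..<q} i))"
    by simp
  also have "\<dots> = (\<Sum>y\<in>PiE {..<q} (\<lambda>i. partition_mults {1..k i} (n i)). \<Prod>i<q. f i (y i))"
    by (rule sum.reindex_bij_betw[OF bij_betw_Omega_family_PiE])
  also have "\<dots> = (\<Prod>i<q. \<Sum>y\<in>partition_mults {1..k i} (n i). f i y)"
    by (subst prod_sum_PiE) (simp_all add: finite_partition_mults)
  finally show ?thesis .
qed

lemma sums_integral_dominated: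
  fixes f :: "nat \<Rightarrow> 'a \<Rightarrow> real"
  assumes f: "\<And>l. integrable M (f l)" and S: "S \<in> borel_measurable M" and w: "integrable M w"
    and sums: "AE \<omega> in M. (\<lambda>l. f l \<omega>) sums S \<omega>"
    and bound: "\<And>n. AE \<omega> in M. \<bar>\<Sum>l<n. f l \<omega>\<bar> \<le> w \<omega>"
  shows "(\<lambda>l. integral\<^sup>L M (f l)) sums integral\<^sup>L M S"
proof -
  have "(\<lambda>n. \<integral>\<omega>. (\<Sum>l<n. f l \<omega>) \<partial>M) \<longlonglongrightarrow> integral\<^sup>L M S"
    using sums bound f by (intro integral_dominated_convergence[OF S _ w]) (auto simp: sums_def)
  then show ?thesis
    unfolding sums_def by (simp add: Bochner_Integration.integral_sum f)
qed

lemma measurable_nat_comp_real: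
  assumes "N \<in> measurable M (count_space UNIV)"
  shows "(\<lambda>\<omega>. f (N \<omega>) :: real) \<in> borel_measurable M"
  using measurable_compose[OF assms, of f borel] by (simp add: measurable_count_space_eq1)

lemma prod_if_1_0:
  "finite A \<Longrightarrow> (\<Prod>i\<in>A. if P i then 1 else 0 :: 'a::comm_semiring_1) = (if \<forall>i\<in>A. P i then 1 else 0)"
  by (induction A rule: finite_induct) auto

context prob_space
begin

lemma sums_expectation_times_power_nat:
  fixes X :: "'a \<Rightarrow> real" and N :: "'a \<Rightarrow> nat"
  assumes X: "X \<in> borel_measurable M" "\<And>\<omega>. \<omega> \<in> space M \<Longrightarrow> \<bar>X \<omega>\<bar> \<le> 1"
    and N: "N \<in> measurable M (count_space UNIV)" and v: "0 \<le> v" "v \<le> 1"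
  shows "(\<lambda>l. (\<integral>\<omega>. X \<omega> * (if N \<omega> = l then 1 else 0) \<partial>M) * v ^ l) sums (\<integral>\<omega>. X \<omega> * v ^ N \<omega> \<partial>M)"
proof -
  have meas: "(\<lambda>\<omega>. X \<omega> * f (N \<omega>)) \<in> borel_measurable M" for f
    using X(1) measurable_nat_comp_real[OF N] by measurable
  have power_le_1: "\<bar>X \<omega> * v ^ l\<bar> \<le> 1" if "\<omega> \<in> space M" for \<omega> l
    using X(2)[OF that] v by (auto simp: abs_mult intro: mult_le_one power_le_one)
  have single: "(\<lambda>l. X \<omega> * (if N \<omega> = l then 1 else 0) * v ^ l) = (\<lambda>l. if l = N \<omega> then X \<omega> * v ^ l else 0)"
    for \<omega> by auto
  have "(\<lambda>l. \<integral>\<omega>. X \<omega> * (if N \<omega> = l then 1 else 0) * v ^ l \<partial>M) sums (\<integral>\<omega>. X \<omega> * v ^ N \<omega> \<partial>M)"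
  proof (rule sums_integral_dominated[where w = "\<lambda>_. 1"])
    show "integrable M (\<lambda>\<omega>. X \<omega> * (if N \<omega> = l then 1 else 0) * v ^ l)" for l
      using meas[of "\<lambda>n. if n = l then 1 else 0"] power_le_1
      by (intro integrable_mult_left integrable_const_bound[where B = 1]) (auto simp: abs_mult)
    show "AE \<omega> in M. (\<lambda>l. X \<omega> * (if N \<omega> = l then 1 else 0) * v ^ l) sums (X \<omega> * v ^ N \<omega>)"
      unfolding single using sums_single[of "N \<omega>" "\<lambda>l. X \<omega> * v ^ l" for \<omega>] by simp
    show "AE \<omega> in M. \<bar>\<Sum>l<n. X \<omega> * (if N \<omega> = l then 1 else 0) * v ^ l\<bar> \<le> 1" for n
      unfolding single using power_le_1 by (simp add: sum.delta)
  qed (use meas in auto)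
  then show ?thesis by simp
qed

lemma expectation_indicator_eq_coeff:
  fixes X :: "'a \<Rightarrow> real" and N :: "'a \<Rightarrow> nat"
  assumes X: "X \<in> borel_measurable M" "\<And>\<omega>. \<omega> \<in> space M \<Longrightarrow> \<bar>X \<omega>\<bar> \<le> 1"
    and N: "N \<in> measurable M (count_space UNIV)"
    and pgf: "\<And>v. 0 < v \<Longrightarrow> v \<le> 1 \<Longrightarrow> (\<integral>\<omega>. X \<omega> * v ^ N \<omega> \<partial>M) = c * g v"
    and ser: "\<And>v. 0 < v \<Longrightarrow> v \<le> 1 \<Longrightarrow> (\<lambda>l. p l * v ^ l) sums g v"
  shows "(\<integral>\<omega>. X \<omega> * (if N \<omega> = l then 1 else 0) \<partial>M) = c * p l"
proof (rule real_powser_unique[where \<delta> = 1 and f = "\<lambda>v. c * g v"])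
  show "(\<lambda>l. (\<integral>\<omega>. X \<omega> * (if N \<omega> = l then 1 else 0) \<partial>M) * v ^ l) sums (c * g v)" if "0 < v" "v \<le> 1" for v
    using sums_expectation_times_power_nat[OF X N, of v] pgf[OF that] that by simp
  show "(\<lambda>l. c * p l * v ^ l) sums (c * g v)" if "0 < v" "v \<le> 1" for v
    using sums_mult[OF ser[OF that], of c] by (simp add: mult.assoc)
qed simp

text \<open>Generalised for the induction on \<open>j\<close>: the first \<open>j\<close> generating variables have already been
  turned into indicators.\<close>

lemma pgf_product_partial_coeffs:
  fixes N :: "'a \<Rightarrow> nat \<Rightarrow> nat" and g :: "nat \<Rightarrow> real \<Rightarrow> real" and p :: "nat \<Rightarrow> nat \<Rightarrow> real"
  assumes meas: "\<And>i. i < q \<Longrightarrow> (\<lambda>\<omega>. N \<omega> i) \<in> measurable M (count_space UNIV)"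
    and pgf: "\<And>u. \<forall>i<q. 0 \<le> u i \<and> u i \<le> 1 \<Longrightarrow>
                (\<integral>\<omega>. (\<Prod>i<q. u i ^ N \<omega> i) \<partial>M) = (\<Prod>i<q. g i (u i))"
    and ser: "\<And>i v. i < q \<Longrightarrow> 0 \<le> v \<Longrightarrow> v \<le> 1 \<Longrightarrow> (\<lambda>l. p i l * v ^ l) sums g i v"
    and "j \<le> q" and "\<forall>i<q. 0 \<le> u i \<and> u i \<le> 1"
  shows "(\<integral>\<omega>. (\<Prod>i<j. if N \<omega> i = m i then 1 else 0) * (\<Prod>i\<in>{j..<q}. u i ^ N \<omega> i) \<partial>M)
      = (\<Prod>i<j. p i (m i)) * (\<Prod>i\<in>{j..<q}. g i (u i))"
  using assms(4,5)
proof (induction j arbitrary: u)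
  case 0
  then show ?case using pgf[of u] by (simp add: atLeast0LessThan)
next
  case (Suc j)
  have jq: "j < q" using Suc by auto
  have split: "{j..<q} = insert j {Suc j..<q}" using jq by auto
  define X where "X \<omega> = (\<Prod>i<j. if N \<omega> i = m i then 1 else 0) * (\<Prod>i\<in>{Suc j..<q}. u i ^ N \<omega> i)" for \<omega>
  define A where "A = (\<Prod>i<j. p i (m i))"
  define B where "B = (\<Prod>i\<in>{Suc j..<q}. g i (u i))"
  have "(\<integral>\<omega>. X \<omega> * (if N \<omega> j = m j then 1 else 0) \<partial>M) = A * B * p j (m j)"
  proof (rule expectation_indicator_eq_coeff[OF _ _ meas[OF jq]])
    show "X \<in> borel_measurable M"
      unfolding X_def using meas jq
      by (intro borel_measurable_times borel_measurable_prod measurable_nat_comp_real) auto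
    show "\<bar>X \<omega>\<bar> \<le> 1" for \<omega>
      unfolding X_def using Suc.prems(2)
      by (auto simp: abs_mult abs_prod intro!: mult_le_one prod_le_1 power_le_one prod_nonneg)
    show "(\<lambda>l. p j l * v ^ l) sums g j v" if "0 < v" "v \<le> 1" for v
      using ser jq that by simp
    show "(\<integral>\<omega>. X \<omega> * v ^ N \<omega> j \<partial>M) = A * B * g j v" if v: "0 < v" "v \<le> 1" for v
    proof -
      define u' where "u' = u(j := v)"
      have "\<forall>i<q. 0 \<le> u' i \<and> u' i \<le> 1" using Suc.prems(2) v by (auto simp: u'_def)
      then have "(\<integral>\<omega>. (\<Prod>i<j. if N \<omega> i = m i then 1 else 0) * (\<Prod>i\<in>{j..<q}. u' i ^ N \<omega> i) \<partial>M)
          = A * (\<Prod>i\<in>{j..<q}. g i (u' i))"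
        using Suc by (simp add: A_def)
      moreover have "(\<Prod>i\<in>{j..<q}. u' i ^ N \<omega> i) = v ^ N \<omega> j * (\<Prod>i\<in>{Suc j..<q}. u i ^ N \<omega> i)" for \<omega>
        unfolding split by (subst prod.insert) (auto simp: u'_def intro!: prod.cong)
      moreover have "(\<Prod>i\<in>{j..<q}. g i (u' i)) = g j v * B"
        unfolding split B_def by (subst prod.insert) (auto simp: u'_def intro!: prod.cong)
      ultimately show ?thesis
        by (simp add: X_def mult_ac)
    qed
  qed
  then show ?case
    by (simp add: X_def A_def B_def mult_ac)
qed

lemma prob_eq_prod_of_product_pgf:
  fixes N :: "'a \<Rightarrow> nat \<Rightarrow> nat" and g :: "nat \<Rightarrow> real \<Rightarrow> real" and p :: "nat \<Rightarrow> nat \<Rightarrow> real"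
  assumes "\<And>i. i < q \<Longrightarrow> (\<lambda>\<omega>. N \<omega> i) \<in> measurable M (count_space UNIV)"
    and "\<And>u. \<forall>i<q. 0 \<le> u i \<and> u i \<le> 1 \<Longrightarrow>
                (\<integral>\<omega>. (\<Prod>i<q. u i ^ N \<omega> i) \<partial>M) = (\<Prod>i<q. g i (u i))"
    and "\<And>i v. i < q \<Longrightarrow> 0 \<le> v \<Longrightarrow> v \<le> 1 \<Longrightarrow> (\<lambda>l. p i l * v ^ l) sums g i v"
  shows "prob {\<omega> \<in> space M. \<forall>i<q. N \<omega> i = m i} = (\<Prod>i<q. p i (m i))"
proof -
  have "prob {\<omega> \<in> space M. \<forall>i<q. N \<omega> i = m i} = (\<integral>\<omega>. indicator {\<omega> \<in> space M. \<forall>i<q. N \<omega> i = m i} \<omega> \<partial>M)"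
    by (simp add: Int_absorb2)
  also have "\<dots> = (\<integral>\<omega>. (\<Prod>i<q. if N \<omega> i = m i then 1 else 0) \<partial>M)"
    by (intro Bochner_Integration.integral_cong refl) (auto simp: prod_if_1_0 indicator_def)
  also have "\<dots> = (\<Prod>i<q. p i (m i))"
    using pgf_product_partial_coeffs[OF assms, of q "\<lambda>_. 1" m] by simp
  finally show ?thesis .
qed

end

lemma mgcp_point_prob:
  fixes P :: "'a measure" and M :: "real \<Rightarrow> 'a \<Rightarrow> nat \<Rightarrow> nat"
  assumes P: "prob_space P" and lam: "\<forall>i<q. \<forall>j\<in>{1..k i}. 0 \<le> lam i j"
    and M: "mgcp_marginals P q k lam M" and s: "0 \<le> s"
  shows "measure P {\<omega> \<in> space P. \<forall>i<q. M s \<omega> i = n i} =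
    (\<Sum>x\<in>Omega_family q k n. exp (- s * (\<Sum>i<q. \<Sum>j=1..k i. lam i j)) *
        s ^ (\<Sum>i<q. \<Sum>j=1..k i. x i j) * (\<Prod>i<q. \<Prod>j=1..k i. lam i j ^ x i j / fact (x i j)))"
proof -
  define g where "g i v = exp (- s * (\<Sum>j=1..k i. lam i j * (1 - v ^ j)))" for i v
  define p where "p i l = exp (- s * (\<Sum>j=1..k i. lam i j)) * exp_poly_coeff {1..k i} (\<lambda>j. s * lam i j) l"
    for i l
  have "measure P {\<omega> \<in> space P. \<forall>i<q. M s \<omega> i = n i} = (\<Prod>i<q. p i (n i))"
  proof (rule prob_space.prob_eq_prod_of_product_pgf[OF P])
    show "(\<lambda>\<omega>. M s \<omega> i) \<in> measurable P (count_space UNIV)" if "i < q" for i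
      using M that by (simp add: mgcp_marginals_def)
    show "(\<integral>\<omega>. (\<Prod>i<q. u i ^ M s \<omega> i) \<partial>P) = (\<Prod>i<q. g i (u i))" if "\<forall>i<q. 0 \<le> u i \<and> u i \<le> 1" for u
      using M s that by (simp add: mgcp_marginals_def g_def exp_sum sum_distrib_left)
    show "(\<lambda>l. p i l * v ^ l) sums g i v" if "i < q" "0 \<le> v" "v \<le> 1" for i v
    proof -
      have "(\<lambda>l. exp_poly_coeff {1..k i} (\<lambda>j. s * lam i j) l * v ^ l) sums exp (\<Sum>j=1..k i. s * lam i j * v ^ j)"
        using lam s that by (intro exp_poly_coeff_sums) auto
      from sums_mult[OF this, of "exp (- s * (\<Sum>j=1..k i. lam i j))"]
      show ?thesis
        by (simp add: p_def g_def mult_ac exp_add[symmetric] sum_distrib_left right_diff_distrib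
            sum_subtractf sum_negf)
    qed
  qed
  also have "\<dots> = (\<Prod>i<q. exp (- s * (\<Sum>j=1..k i. lam i j))) *
      (\<Prod>i<q. exp_poly_coeff {1..k i} (\<lambda>j. s * lam i j) (n i))"
    by (simp add: p_def prod.distrib)
  also have "(\<Prod>i<q. exp (- s * (\<Sum>j=1..k i. lam i j))) = exp (- s * (\<Sum>i<q. \<Sum>j=1..k i. lam i j))"
    by (simp add: exp_sum sum_distrib_left)
  also have "(\<Prod>i<q. exp_poly_coeff {1..k i} (\<lambda>j. s * lam i j) (n i))
      = (\<Sum>x\<in>Omega_family q k n. \<Prod>i<q. \<Prod>j=1..k i. (s * lam i j) ^ x i j / fact (x i j))"
    unfolding exp_poly_coeff_def by (rule sum_Omega_family_prod[symmetric])
  also have "(\<Sum>x\<in>Omega_family q k n. \<Prod>i<q. \<Prod>j=1..k i. (s * lam i j) ^ x i j / fact (x i j))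
      = (\<Sum>x\<in>Omega_family q k n.
          s ^ (\<Sum>i<q. \<Sum>j=1..k i. x i j) * (\<Prod>i<q. \<Prod>j=1..k i. lam i j ^ x i j / fact (x i j)))"
    by (intro sum.cong refl) (simp add: power_sum power_mult_distrib prod.distrib[symmetric] mult_ac)
  finally show ?thesis by (simp add: sum_distrib_left mult_ac)
qed

section \<open>Moments of the tempered stable subordinator\<close>

lemma exp_partial_sum_le:
  fixes x :: real
  assumes "0 \<le> x"
  shows "(\<Sum>m<n. x ^ m / fact m) \<le> exp x"
proof -
  have exp: "(\<lambda>m. x ^ m / fact m) sums exp x"
    using exp_converges[of x] by (simp add: divide_inverse mult_ac)
  then show ?thesis
    using sum_le_suminf[of "\<lambda>m. x ^ m / fact m" "{..<n}"] assms by (simp add: sums_iff)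
qed

lemma power_times_exp_le:
  fixes x L :: real
  assumes "0 \<le> x" "0 < L"
  shows "x ^ m * exp (- L * x) \<le> fact m / L ^ m"
proof -
  have "(L * x) ^ m / fact m \<le> (\<Sum>i<Suc m. (L * x) ^ i / fact i)"
    using assms by (intro member_le_sum) auto
  also have "\<dots> \<le> exp (L * x)"
    using assms by (intro exp_partial_sum_le) auto
  finally have "L ^ m * x ^ m \<le> fact m * exp (L * x)"
    by (simp add: power_mult_distrib field_simps)
  then show ?thesis
    using assms by (simp add: field_simps exp_minus)
qed

context prob_space
begin

lemma integrable_power_times_exp:
  fixes X :: "'a \<Rightarrow> real"
  assumes "X \<in> borel_measurable M" "AE \<omega> in M. 0 \<le> X \<omega>" "0 < L"
  shows "integrable M (\<lambda>\<omega>. X \<omega> ^ m * exp (- L * X \<omega>))"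
proof (rule integrable_const_bound[where B = "fact m / L ^ m"])
  show "AE \<omega> in M. norm (X \<omega> ^ m * exp (- L * X \<omega>)) \<le> fact m / L ^ m"
    using assms(2) by eventually_elim (use assms(3) power_times_exp_le in \<open>auto simp: abs_mult\<close>)
qed (use assms(1) in measurable)

lemma sums_moments_times_exp:
  fixes X :: "'a \<Rightarrow> real"
  assumes X: "X \<in> borel_measurable M" "AE \<omega> in M. 0 \<le> X \<omega>" and L: "0 < L" and y: "0 \<le> y" "y \<le> L"
  shows "(\<lambda>m. (\<integral>\<omega>. X \<omega> ^ m * exp (- L * X \<omega>) \<partial>M) / fact m * y ^ m) sums
           (\<integral>\<omega>. exp (- (L - y) * X \<omega>) \<partial>M)"
proof -
  have exp_split: "exp (- (L - y) * x) = exp (- L * x) * exp (y * x)" for x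
    by (simp add: exp_add[symmetric] algebra_simps)
  have terms: "X \<omega> ^ m * exp (- L * X \<omega>) / fact m * y ^ m = exp (- L * X \<omega>) * ((y * X \<omega>) ^ m / fact m)"
    for \<omega> m by (simp add: power_mult_distrib)
  have "(\<lambda>m. \<integral>\<omega>. X \<omega> ^ m * exp (- L * X \<omega>) / fact m * y ^ m \<partial>M) sums (\<integral>\<omega>. exp (- (L - y) * X \<omega>) \<partial>M)"
  proof (rule sums_integral_dominated[where w = "\<lambda>_. 1"])
    show "integrable M (\<lambda>\<omega>. X \<omega> ^ m * exp (- L * X \<omega>) / fact m * y ^ m)" for m
      using integrable_power_times_exp[OF X L] by simp
    show "AE \<omega> in M. (\<lambda>m. X \<omega> ^ m * exp (- L * X \<omega>) / fact m * y ^ m) sums exp (- (L - y) * X \<omega>)"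
      unfolding terms exp_split using exp_converges[of "y * X \<omega>" for \<omega>]
      by (intro AE_I2 sums_mult) (simp add: divide_inverse mult_ac)
    show "AE \<omega> in M. \<bar>\<Sum>m<n. X \<omega> ^ m * exp (- L * X \<omega>) / fact m * y ^ m\<bar> \<le> 1" for n
      using X(2)
    proof eventually_elim
      case (elim \<omega>)
      have "0 \<le> (\<Sum>m<n. (y * X \<omega>) ^ m / fact m)"
        using elim y by (auto intro!: sum_nonneg)
      then have "\<bar>\<Sum>m<n. X \<omega> ^ m * exp (- L * X \<omega>) / fact m * y ^ m\<bar>
          = exp (- L * X \<omega>) * (\<Sum>m<n. (y * X \<omega>) ^ m / fact m)"
        unfolding terms sum_distrib_left[symmetric] by simp
      also have "\<dots> \<le> exp (- (L - y) * X \<omega>)"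
        unfolding exp_split using elim y by (intro mult_left_mono exp_partial_sum_le) auto
      also have "\<dots> \<le> 1"
        using elim y by (simp add: mult_nonpos_nonneg)
      finally show ?case .
    qed
  qed (use X(1) in measurable)
  then show ?thesis by simp
qed

end

lemma abs_gchoose_le_pochhammer:
  fixes a :: real
  assumes "0 \<le> a"
  shows "\<bar>a gchoose m\<bar> \<le> pochhammer a m / fact m"
proof -
  have "\<bar>a gchoose m\<bar> = (\<Prod>i=0..<m. \<bar>a - of_nat i\<bar>) / fact m"
    by (simp add: gbinomial_prod_rev abs_prod)
  also have "\<dots> \<le> (\<Prod>i=0..<m. a + of_nat i) / fact m"
    by (intro divide_right_mono prod_mono) (use assms in auto)
  also have "\<dots> = pochhammer a m / fact m"
    by (simp add: pochhammer_prod)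
  finally show ?thesis .
qed

lemma summable_on_pairs_dominated:
  fixes F G :: "nat \<Rightarrow> nat \<Rightarrow> real"
  assumes FG: "\<And>r m. \<bar>F r m\<bar> \<le> G r m"
    and G_rows: "\<And>r. (\<lambda>m. G r m) sums g r" and g: "summable g"
  shows "(\<lambda>(r, m). F r m) summable_on UNIV \<times> UNIV"
proof -
  have G_nonneg: "0 \<le> G r m" for r m
    using FG[of r m] by linarith
  have "(\<lambda>(r, m). G r m) summable_on UNIV \<times> UNIV"
  proof (rule summable_on_SigmaI[where g = g])
    show "((\<lambda>m. case (r, m) of (r, m) \<Rightarrow> G r m) has_sum g r) UNIV" for r
      using sums_nonneg_imp_has_sum[OF G_rows G_nonneg] by simp
    have "0 \<le> g r" for r
      by (rule sums_le[OF _ sums_zero G_rows]) (simp add: G_nonneg)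
    then show "g summable_on UNIV"
      by (rule summable_nonneg_imp_summable_on[OF g])
  qed (use G_nonneg in auto)
  then have "(\<lambda>x. norm (case x of (r, m) \<Rightarrow> F r m)) summable_on UNIV \<times> UNIV"
    by (rule Infinite_Sum.abs_summable_on_comparison_test') (use FG in \<open>simp add: case_prod_unfold\<close>)
  then show ?thesis
    by (rule abs_summable_summable)
qed

lemma double_series_swap:
  fixes F G :: "nat \<Rightarrow> nat \<Rightarrow> real"
  assumes FG: "\<And>r m. \<bar>F r m\<bar> \<le> G r m"
    and G_rows: "\<And>r. (\<lambda>m. G r m) sums g r" and g: "summable g"
    and F_rows: "\<And>r. (\<lambda>m. F r m) sums f r"
  shows "summable (\<lambda>r. F r m)" and "(\<lambda>m. \<Sum>r. F r m) sums (\<Sum>r. f r)"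
proof -
  define S where "S = infsum (\<lambda>(r, m). F r m) (UNIV \<times> UNIV)"
  have S: "((\<lambda>(r, m). F r m) has_sum S) (UNIV \<times> UNIV)"
    unfolding S_def by (rule has_sum_infsum summable_on_pairs_dominated[OF FG G_rows g])+
  have "(f has_sum S) UNIV"
  proof (rule has_sum_SigmaD[where B = "\<lambda>_. UNIV"])
    show "((\<lambda>(r, m). F r m) has_sum S) (Sigma UNIV (\<lambda>_. UNIV))"
      using S by simp
    have "summable (\<lambda>m. norm (F r m))" for r
      by (rule summable_comparison_test'[where g = "G r" and N = 0]) (use FG G_rows in \<open>auto simp: sums_iff\<close>)
    then show "((\<lambda>m. case (r, m) of (r, m) \<Rightarrow> F r m) has_sum f r) UNIV" for r
      using norm_summable_imp_has_sum[OF _ F_rows] by simp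
  qed
  then have S_eq: "S = (\<Sum>r. f r)"
    by (rule sums_unique[OF has_sum_imp_sums])
  have S_swap: "((\<lambda>(m, r). F r m) has_sum S) (Sigma UNIV (\<lambda>_. UNIV))"
    using has_sum_swap[THEN iffD1, OF S] by (simp add: case_prod_unfold)
  then have "(\<lambda>(m, r). F r m) summable_on (Sigma UNIV (\<lambda>_. UNIV))"
    unfolding summable_on_def by blast
  from summable_on_SigmaD1[where f = "\<lambda>m r. F r m", OF this]
  have cols: "(\<lambda>r. F r m) summable_on UNIV" for m
    by simp
  then show "summable (\<lambda>r. F r m)"
    by (rule summable_on_imp_summable)
  have col_sums: "infsum (\<lambda>r. F r m) UNIV = (\<Sum>r. F r m)" for m
    using has_sum_imp_sums[OF has_sum_infsum[OF cols]] by (simp add: sums_iff)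
  have "((\<lambda>m. infsum (\<lambda>r. F r m) UNIV) has_sum S) UNIV"
  proof (rule has_sum_SigmaD[where B = "\<lambda>_. UNIV", OF S_swap])
    show "((\<lambda>r. case (m, r) of (m, r) \<Rightarrow> F r m) has_sum infsum (\<lambda>r. F r m) UNIV) UNIV" for m
      using has_sum_infsum[OF cols] by simp
  qed
  then have "(\<lambda>m. infsum (\<lambda>r. F r m) UNIV) sums S"
    by (rule has_sum_imp_sums)
  then show "(\<lambda>m. \<Sum>r. F r m) sums (\<Sum>r. f r)"
    unfolding col_sums S_eq .
qed

lemma neg_gchoose_times_neg_power:
  fixes a y :: real
  shows "((- a) gchoose m) * (- y) ^ m = pochhammer a m / fact m * y ^ m"
proof -
  have "((- a) gchoose m) * (- y) ^ m = ((- 1) ^ m * (- 1) ^ m) * (pochhammer a m / fact m * y ^ m)"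
    by (simp add: gbinomial_pochhammer power_minus[of y] mult_ac)
  also have "(- 1 :: real) ^ m * (- 1) ^ m = 1"
    by (simp add: power_mult_distrib[symmetric])
  finally show ?thesis by simp
qed

lemma powr_mult_of_nat:
  fixes b c :: real
  assumes "0 < b"
  shows "b powr (c * real r) = (b powr c) ^ r"
  using assms by (simp add: powr_powr[symmetric] powr_realpow)

lemma pochhammer_binomial_sums:
  fixes a y T :: real
  assumes "0 \<le> y" "y < T"
  shows "(\<lambda>m. pochhammer a m / fact m * y ^ m * T powr (a - real m)) sums (T powr (2 * a) * (T - y) powr (- a))"
proof -
  have "\<bar>- y\<bar> < T" using assms by simp
  from sums_mult[OF gen_binomial_real'[OF this, of "- a"], of "T powr (2 * a)"]
  have "(\<lambda>m. T powr (2 * a) * ((- a gchoose m) * (- y) ^ m * T powr (- a - real m)))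
      sums (T powr (2 * a) * (T - y) powr (- a))"
    by simp
  moreover have "T powr (2 * a) * T powr (- a - real m) = T powr (a - real m)" for m
    by (simp add: powr_add[symmetric])
  ultimately show ?thesis
    by (simp add: neg_gchoose_times_neg_power mult.left_commute)
qed

lemma exp_powr_powser:
  fixes t \<alpha> T y :: real
  assumes t: "0 \<le> t" and \<alpha>: "0 \<le> \<alpha>" and y: "0 \<le> y" "y < T"
  defines "F \<equiv> \<lambda>r m. (- t) ^ r / fact r * ((\<alpha> * real r) gchoose m) * (- y) ^ m * T powr (\<alpha> * real r - real m)"
  shows "summable (\<lambda>r. F r m)" and "(\<lambda>m. \<Sum>r. F r m) sums exp (- t * (T - y) powr \<alpha>)"
proof -
  have T: "0 < T" using y by linarith
  txt \<open>The majorant \<open>G\<close> replaces the binomial coefficient by its Pochhammer bound; its rows are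
    binomial series of \<open>(T - y) powr (- \<alpha> r)\<close>, whose values form an exponential series.\<close>
  define G where "G r m = t ^ r / fact r * (pochhammer (\<alpha> * real r) m / fact m * y ^ m) * T powr (\<alpha> * real r - real m)"
    for r m
  define g where "g r = (t * T powr (2 * \<alpha>) * (T - y) powr (- \<alpha>)) ^ r / fact r" for r
  have "\<bar>F r m\<bar> \<le> G r m" for r m
  proof -
    have "\<bar>F r m\<bar> = t ^ r / fact r * (\<bar>(\<alpha> * real r) gchoose m\<bar> * y ^ m) * T powr (\<alpha> * real r - real m)"
      unfolding F_def using t y by (simp add: abs_mult power_abs)
    also have "\<dots> \<le> G r m"
      unfolding G_def using t y \<alpha>
      by (intro mult_right_mono mult_left_mono abs_gchoose_le_pochhammer) auto
    finally show ?thesis .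
  qed
  moreover have "(\<lambda>m. G r m) sums g r" for r
  proof -
    have "T powr (2 * (\<alpha> * real r)) * (T - y) powr (- (\<alpha> * real r)) = (T powr (2 * \<alpha>) * (T - y) powr (- \<alpha>)) ^ r"
      using T y by (simp add: powr_mult_of_nat[symmetric] power_mult_distrib mult.assoc)
    then show ?thesis
      using sums_mult[OF pochhammer_binomial_sums[OF y, of "\<alpha> * real r"], of "t ^ r / fact r"]
      unfolding G_def g_def by (simp add: power_mult_distrib mult_ac)
  qed
  moreover have "summable g"
    unfolding g_def using exp_converges[of "t * T powr (2 * \<alpha>) * (T - y) powr (- \<alpha>)"]
    by (simp add: sums_iff divide_inverse mult_ac)
  moreover have F_rows: "(\<lambda>m. F r m) sums ((- t * (T - y) powr \<alpha>) ^ r / fact r)" for r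
  proof -
    have "\<bar>- y\<bar> < T" using y by simp
    from sums_mult[OF gen_binomial_real'[OF this, of "\<alpha> * real r"], of "(- t) ^ r / fact r"]
    show ?thesis
      unfolding power_mult_distrib[of "- t"] using T y by (simp add: F_def powr_mult_of_nat mult_ac)
  qed
  ultimately have "summable (\<lambda>r. F r m)" and "(\<lambda>m. \<Sum>r. F r m) sums (\<Sum>r. (- t * (T - y) powr \<alpha>) ^ r / fact r)"
    by (rule double_series_swap)+
  moreover have "(\<Sum>r. (- t * (T - y) powr \<alpha>) ^ r / fact r) = exp (- t * (T - y) powr \<alpha>)"
    using exp_converges[of "- t * (T - y) powr \<alpha>"] by (simp add: sums_iff divide_inverse mult_ac)
  ultimately show "summable (\<lambda>r. F r m)" and "(\<lambda>m. \<Sum>r. F r m) sums exp (- t * (T - y) powr \<alpha>)"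
    by simp_all
qed

lemma fact_times_gchoose_eq_Gamma:
  fixes a :: real
  assumes "0 \<le> a"
  shows "fact m * (a gchoose m) = Gamma (a + 1) * rGamma (a + 1 - real m)"
proof -
  have "a + 1 \<notin> \<int>\<^sub>\<le>\<^sub>0"
    using assms nonpos_Ints_nonpos by force
  from gbinomial_Gamma[OF this, of m]
  show ?thesis by (simp add: rGamma_inverse_Gamma divide_inverse algebra_simps)
qed

lemma exp_powr_powser_term_eq_Gamma:
  fixes t \<alpha> T v :: real
  assumes "0 \<le> \<alpha>" "0 < T"
  shows "(- t) ^ r / fact r * ((\<alpha> * real r) gchoose m) * (- v) ^ m * T powr (\<alpha> * real r - real m)
    = (- 1 / T) ^ m / fact m * v ^ m *
      ((- t * T powr \<alpha>) ^ r / fact r * Gamma (\<alpha> * real r + 1) * rGamma (\<alpha> * real r + 1 - real m))"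
proof -
  have "Gamma (\<alpha> * real r + 1) * rGamma (\<alpha> * real r + 1 - real m) = fact m * ((\<alpha> * real r) gchoose m)"
    using fact_times_gchoose_eq_Gamma[of "\<alpha> * real r" m] assms by simp
  moreover have "T powr (\<alpha> * real r - real m) = (T powr \<alpha>) ^ r / T ^ m"
    using assms by (simp add: powr_diff powr_mult_of_nat powr_realpow)
  moreover have "(- t * T powr \<alpha>) ^ r = (- t) ^ r * (T powr \<alpha>) ^ r" "(- v) ^ m = (- 1) ^ m * v ^ m"
    "(- 1 / T) ^ m = (- 1) ^ m / T ^ m"
    by (simp_all only: power_mult_distrib power_minus[of v] power_divide)
  ultimately show ?thesis
    by (simp only: mult.assoc times_divide_eq_left times_divide_eq_right) (simp add: field_simps)
qed

definition tempered_series_term :: "real \<Rightarrow> real \<Rightarrow> real \<Rightarrow> nat \<Rightarrow> nat \<Rightarrow> real" where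
  "tempered_series_term \<alpha> t T m r =
     (- t * T powr \<alpha>) ^ r / fact r * Gamma (\<alpha> * real r + 1) * rGamma (\<alpha> * real r + 1 - real m)"

lemma exp_powr_Gamma_powser:
  fixes t \<alpha> T :: real
  assumes t: "0 \<le> t" and \<alpha>: "0 \<le> \<alpha>" and T: "0 < T"
  shows "summable (tempered_series_term \<alpha> t T m)"
    and "0 \<le> v \<Longrightarrow> v < T \<Longrightarrow> (\<lambda>m. (- 1 / T) ^ m / fact m * v ^ m * (\<Sum>r. tempered_series_term \<alpha> t T m r))
           sums exp (- t * (T - v) powr \<alpha>)"
proof -
  have F_eq: "(- t) ^ r / fact r * ((\<alpha> * real r) gchoose m) * (- v) ^ m * T powr (\<alpha> * real r - real m)
      = (- 1 / T) ^ m / fact m * v ^ m * tempered_series_term \<alpha> t T m r" for r m v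
    unfolding tempered_series_term_def by (rule exp_powr_powser_term_eq_Gamma[OF \<alpha> T])
  have summable: "summable (tempered_series_term \<alpha> t T m)" for m
  proof -
    have "summable (\<lambda>r. (- 1 / T) ^ m / fact m * (T / 2) ^ m * tempered_series_term \<alpha> t T m r)"
      using exp_powr_powser(1)[OF t \<alpha>, of "T / 2" T m] T unfolding F_eq by simp
    then show ?thesis
      using T by simp
  qed
  then show "summable (tempered_series_term \<alpha> t T m)" .
  show "(\<lambda>m. (- 1 / T) ^ m / fact m * v ^ m * (\<Sum>r. tempered_series_term \<alpha> t T m r))
      sums exp (- t * (T - v) powr \<alpha>)" if "0 \<le> v" "v < T"
    using exp_powr_powser(2)[OF t \<alpha> that] unfolding F_eq suminf_mult[OF summable] .
qed

context prob_space
begin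

lemma tempered_stable_moment:
  fixes X :: "'a \<Rightarrow> real"
  assumes X: "X \<in> borel_measurable M" "AE \<omega> in M. 0 \<le> X \<omega>"
    and laplace: "\<And>s. 0 \<le> s \<Longrightarrow> (\<integral>\<omega>. exp (- s * X \<omega>) \<partial>M) = exp (- t * ((s + \<theta>) powr \<alpha> - \<theta> powr \<alpha>))"
    and t: "0 \<le> t" and \<alpha>: "0 \<le> \<alpha>" and \<theta>: "0 < \<theta>" and L: "0 < L"
  shows "(\<integral>\<omega>. X \<omega> ^ m * exp (- L * X \<omega>) \<partial>M)
    = exp (t * \<theta> powr \<alpha>) * (- 1 / (L + \<theta>)) ^ m * (\<Sum>r. tempered_series_term \<alpha> t (L + \<theta>) m r)"
proof -
  define T where "T = L + \<theta>"
  have T: "0 < T" "L < T"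
    using L \<theta> by (auto simp: T_def)
  txt \<open>Both sides are coefficients of \<open>E exp (- (L - v) X)\<close> as a power series in \<open>v\<close>, expanded once
    through the moments and once through the Laplace transform.\<close>
  have "(\<integral>\<omega>. X \<omega> ^ m * exp (- L * X \<omega>) \<partial>M) / fact m
      = exp (t * \<theta> powr \<alpha>) * ((- 1 / T) ^ m / fact m * (\<Sum>r. tempered_series_term \<alpha> t T m r))"
  proof (rule real_powser_unique[OF L])
    fix v :: real
    assume v: "0 < v" "v \<le> L"
    show "(\<lambda>m. (\<integral>\<omega>. X \<omega> ^ m * exp (- L * X \<omega>) \<partial>M) / fact m * v ^ m) sums (\<integral>\<omega>. exp (- (L - v) * X \<omega>) \<partial>M)"
      using v by (intro sums_moments_times_exp[OF X L]) auto
    have "(\<integral>\<omega>. exp (- (L - v) * X \<omega>) \<partial>M) = exp (t * \<theta> powr \<alpha>) * exp (- t * (T - v) powr \<alpha>)"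
      using laplace[of "L - v"] v by (simp add: T_def exp_add[symmetric] algebra_simps)
    then show "(\<lambda>m. exp (t * \<theta> powr \<alpha>) * ((- 1 / T) ^ m / fact m * (\<Sum>r. tempered_series_term \<alpha> t T m r)) * v ^ m)
        sums (\<integral>\<omega>. exp (- (L - v) * X \<omega>) \<partial>M)"
      using sums_mult[OF exp_powr_Gamma_powser(2)[OF t \<alpha> T(1), of v], of "exp (t * \<theta> powr \<alpha>)"] v T
      by (simp add: mult_ac)
  qed
  then show ?thesis
    by (simp add: T_def field_simps)
qed

lemma weighted_tempered_stable_moment:
  fixes X :: "'a \<Rightarrow> real"
  assumes "X \<in> borel_measurable M" "AE \<omega> in M. 0 \<le> X \<omega>"
    and "\<And>s. 0 \<le> s \<Longrightarrow> (\<integral>\<omega>. exp (- s * X \<omega>) \<partial>M) = exp (- t * ((s + \<theta>) powr \<alpha> - \<theta> powr \<alpha>))"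
    and t: "0 \<le> t" and \<alpha>: "0 \<le> \<alpha>" and \<theta>: "0 < \<theta>" and L: "0 < L"
  shows "C * (\<integral>\<omega>. X \<omega> ^ m * exp (- L * X \<omega>) \<partial>M) = exp (t * \<theta> powr \<alpha>) *
    (\<Sum>r. (- t * (L + \<theta>) powr \<alpha>) ^ r / fact r * Gamma (\<alpha> * real r + 1)
        * rGamma (\<alpha> * real r + 1 - real m) * ((- 1 / (L + \<theta>)) ^ m * C))"
proof -
  have "C * (\<integral>\<omega>. X \<omega> ^ m * exp (- L * X \<omega>) \<partial>M)
      = exp (t * \<theta> powr \<alpha>) * ((\<Sum>r. tempered_series_term \<alpha> t (L + \<theta>) m r) * ((- 1 / (L + \<theta>)) ^ m * C))"
    using tempered_stable_moment[OF assms, of m] by (simp add: mult_ac)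
  also have "\<dots> = exp (t * \<theta> powr \<alpha>) * (\<Sum>r. tempered_series_term \<alpha> t (L + \<theta>) m r * ((- 1 / (L + \<theta>)) ^ m * C))"
    using L \<theta> by (simp only: suminf_mult2[OF exp_powr_Gamma_powser(1)[OF t \<alpha>]] add_pos_pos)
  finally show ?thesis
    by (simp only: tempered_series_term_def)
qed

end

section \<open>Subordination\<close>

lemma subordinated_prob_eq_sum_moments:
  fixes P :: "'a measure" and M :: "real \<Rightarrow> 'a \<Rightarrow> nat \<Rightarrow> nat" and D :: "real \<Rightarrow> 'a \<Rightarrow> real"
  assumes P: "prob_space P" and lam: "\<forall>i<q. \<forall>j\<in>{1..k i}. 0 \<le> lam i j"
    and M: "mgcp_marginals P q k lam M"
    and D: "D t \<in> borel_measurable P" "AE \<omega> in P. 0 \<le> D t \<omega>"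
    and L: "0 < (\<Sum>i<q. \<Sum>j=1..k i. lam i j)"
  shows "subordinated_prob P q M D t n =
    (\<Sum>x\<in>Omega_family q k n. (\<Prod>i<q. \<Prod>j=1..k i. lam i j ^ x i j / fact (x i j)) *
       (\<integral>\<omega>. D t \<omega> ^ (\<Sum>i<q. \<Sum>j=1..k i. x i j) * exp (- (\<Sum>i<q. \<Sum>j=1..k i. lam i j) * D t \<omega>) \<partial>P))"
proof -
  interpret prob_space P by (fact P)
  define L where "L = (\<Sum>i<q. \<Sum>j=1..k i. lam i j)"
  define c where "c x = (\<Prod>i<q. \<Prod>j=1..k i. lam i j ^ x i j / fact (x i j))" for x :: "nat \<Rightarrow> nat \<Rightarrow> nat"
  define jumps where "jumps x = (\<Sum>i<q. \<Sum>j=1..k i. x i j)" for x :: "nat \<Rightarrow> nat \<Rightarrow> nat"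
  define h where "h s = (if 0 \<le> s then \<Sum>x\<in>Omega_family q k n. exp (- s * L) * s ^ jumps x * c x else 0)" for s
  have h_meas: "h \<in> borel_measurable borel"
    unfolding h_def by measurable
  have "subordinated_prob P q M D t n = integral\<^sup>L (distr P borel (D t)) h"
    unfolding subordinated_prob_def
    by (intro arg_cong[where f = "integral\<^sup>L _"] ext)
       (simp add: h_def mgcp_point_prob[OF P lam M] L_def jumps_def c_def)
  also have "\<dots> = (\<integral>\<omega>. h (D t \<omega>) \<partial>P)"
    by (rule integral_distr[OF D(1) h_meas])
  also have "\<dots> = (\<integral>\<omega>. (\<Sum>x\<in>Omega_family q k n. c x * (D t \<omega> ^ jumps x * exp (- L * D t \<omega>))) \<partial>P)"
    using D(2) by (intro integral_cong_AE) (use D(1) h_meas in \<open>auto simp: h_def mult_ac intro!: sum.cong\<close>)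
  also have "\<dots> = (\<Sum>x\<in>Omega_family q k n. c x * (\<integral>\<omega>. D t \<omega> ^ jumps x * exp (- L * D t \<omega>) \<partial>P))"
    using integrable_power_times_exp[OF D L[folded L_def]]
    by (subst Bochner_Integration.integral_sum) auto
  finally show ?thesis
    by (simp add: L_def jumps_def c_def)
qed

lemma prod_neg_div_power:
  fixes T :: real
  shows "(\<Prod>i<q. \<Prod>j=1..k i. (- lam i j / T) ^ x i j / fact (x i j))
       = (- 1 / T) ^ (\<Sum>i<q. \<Sum>j=1..k i. x i j) * (\<Prod>i<q. \<Prod>j=1..k i. lam i j ^ x i j / fact (x i j))"
proof -
  have "(\<Prod>i<q. \<Prod>j=1..k i. (- lam i j / T) ^ x i j / fact (x i j))
      = (\<Prod>i<q. \<Prod>j=1..k i. (- 1 / T) ^ x i j * (lam i j ^ x i j / fact (x i j)))"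
    by (intro prod.cong refl) (simp add: power_mult_distrib[symmetric])
  also have "\<dots> = (- 1 / T) ^ (\<Sum>i<q. \<Sum>j=1..k i. x i j) * (\<Prod>i<q. \<Prod>j=1..k i. lam i j ^ x i j / fact (x i j))"
    by (simp only: prod.distrib power_sum)
  finally show ?thesis .
qed

theorem mainTheorem13:
  fixes P :: "'a measure" and q :: nat and k :: "nat \<Rightarrow> nat"
    and lam :: "nat \<Rightarrow> nat \<Rightarrow> real" and \<alpha> \<theta> t :: real
    and M :: "real \<Rightarrow> 'a \<Rightarrow> nat \<Rightarrow> nat" and D :: "real \<Rightarrow> 'a \<Rightarrow> real"
    and n :: "nat \<Rightarrow> nat"
  assumes "prob_space P"
    and "q \<ge> 1" and "\<forall>i<q. k i \<ge> 1"
    and "\<forall>i<q. \<forall>j\<in>{1..k i}. lam i j > 0"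
    and "0 < \<alpha>" and "\<alpha> < 1" and "\<theta> > 0"
    and "mgcp_marginals P q k lam M"
    and "tss_marginals P \<alpha> \<theta> D"
    and "t \<ge> 0"
  shows "subordinated_prob P q M D t n =
    (let L = (\<Sum>i<q. \<Sum>j=1..k i. lam i j) in
     exp (t * \<theta> powr \<alpha>) *
     (\<Sum>x\<in>Omega_family q k n.
        (\<Sum>r. (- t * (L + \<theta>) powr \<alpha>) ^ r / fact r
              * Gamma (\<alpha> * real r + 1)
              * rGamma (\<alpha> * real r + 1 - real (\<Sum>i<q. \<Sum>j=1..k i. x i j))
              * (\<Prod>i<q. \<Prod>j=1..k i. (- lam i j / (L + \<theta>)) ^ x i j / fact (x i j)))))"
proof -
  interpret prob_space P by (fact assms(1))
  define L where "L = (\<Sum>i<q. \<Sum>j=1..k i. lam i j)"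
  have L: "0 < L"
    unfolding L_def using assms(2-4) by (intro sum_pos) (auto simp: Suc_le_eq intro!: sum_pos)
  have D: "D t \<in> borel_measurable P" "AE \<omega> in P. 0 \<le> D t \<omega>"
    and laplace: "\<And>s. 0 \<le> s \<Longrightarrow> (\<integral>\<omega>. exp (- s * D t \<omega>) \<partial>P) = exp (- t * ((s + \<theta>) powr \<alpha> - \<theta> powr \<alpha>))"
    using assms(9,10) by (auto simp: tss_marginals_def)
  note moment = weighted_tempered_stable_moment[OF D laplace assms(10) less_imp_le[OF assms(5)] assms(7) L]
  have "subordinated_prob P q M D t n = (\<Sum>x\<in>Omega_family q k n.
      (\<Prod>i<q. \<Prod>j=1..k i. lam i j ^ x i j / fact (x i j)) *
      (\<integral>\<omega>. D t \<omega> ^ (\<Sum>i<q. \<Sum>j=1..k i. x i j) * exp (- L * D t \<omega>) \<partial>P))"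
    using assms(4) L unfolding L_def
    by (intro subordinated_prob_eq_sum_moments[where D = D and t = t, OF assms(1) _ assms(8) D])
       (auto intro: less_imp_le)
  also have "\<dots> = exp (t * \<theta> powr \<alpha>) * (\<Sum>x\<in>Omega_family q k n.
        (\<Sum>r. (- t * (L + \<theta>) powr \<alpha>) ^ r / fact r
              * Gamma (\<alpha> * real r + 1)
              * rGamma (\<alpha> * real r + 1 - real (\<Sum>i<q. \<Sum>j=1..k i. x i j))
              * (\<Prod>i<q. \<Prod>j=1..k i. (- lam i j / (L + \<theta>)) ^ x i j / fact (x i j))))"
    unfolding sum_distrib_left prod_neg_div_power by (intro sum.cong refl moment)
  finally show ?thesis
    by (simp add: L_def)
qed

end
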